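(* For $\upsilon=2/3$, the limit $\lim_{N\to\infty,\ N\text{ odd}}\rho(\upsilon,N)$ does not exist (here $N$ ranges over all odd positive integers, not only primes).
   Context: For an integer $N\ge 2$ and $f:\mathbb{Z}_N\to\mathbb{C}$, define $\mathbb{E}(f)=\frac1N\sum_{n\in\mathbb{Z}_N} f(n)$ and $\Lambda_3(f)=\frac{1}{N^2}\sum_{n,d\in\mathbb{Z}_N} f(n)f(n+d)f(n+2d)$. For $\upsilon\in(0,1]$, $\rho(\upsilon,N)=\min\{\Lambda_3(f): f:\mathbb{Z}_N\to[0,1],\ \mathbb{E}(f)\ge\upsilon\}$. *)

theory Defs
  imports Complex_Main
begin

text \<open>Z_N is represented by the residues {0..<N}; addition is taken mod N.
  A function Z_N -> C / [0,1] is a function on nat whose values on {0..<N} matter.\<close>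

definition ZE :: "nat \<Rightarrow> (nat \<Rightarrow> real) \<Rightarrow> real" where
  "ZE N f = (1 / real N) * (\<Sum>n<N. f n)"

definition Lambda3 :: "nat \<Rightarrow> (nat \<Rightarrow> real) \<Rightarrow> real" where
  "Lambda3 N f = (1 / (real N)^2) *
     (\<Sum>n<N. \<Sum>d<N. f n * f ((n + d) mod N) * f ((n + 2 * d) mod N))"

text \<open>rho(v,N) = min of Lambda3 over f : Z_N -> [0,1] with mean >= v
  (the minimum exists by compactness, so it equals the infimum).\<close>
definition rho :: "real \<Rightarrow> nat \<Rightarrow> real" where
  "rho v N = Inf {Lambda3 N f | f. (\<forall>n<N. 0 \<le> f n \<and> f n \<le> 1) \<and> ZE N f \<ge> v}"

end

theory Submission
  imports Defs "HOL-Analysis.Analysis" "HOL-Number_Theory.Cong"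
begin

(* If 3 divides N, the indicator of the non-multiples of 3 has mean 2/3, and n, n + d, n + 2d all
   lie in it only when 3 divides d; hence rho(2/3, N) <= 2/9.

   If N is coprime to 6, let F be the discrete Fourier transform of an admissible f, and
   S = F(0) = sum f. Then N^3 Lambda3(f) = sum_r F(r)^2 conj F(2r); the term r = 0 is S^3, and by Parseval
   the others add up to at least -(N sum f^2 - S^2) max_{r <> 0} |F(2r)|. For r <> 0 the root
   z = omega^(2r) has z, z^2, z^3 <> 1, so the nonnegative polynomial (1 + Re(w z^a))^3 has mean
   5/2 over a; with x y <= x/3 + (1 + y)^3/12 on [0,1] x [-1,1] this yields |F(2r)| <= 23N/72,
   and then Lambda3(f) >= 73/324 > 2/9.

   Both kinds of N occur among arbitrarily large odd numbers, so no limit exists. *)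

section \<open>Three-term progressions modulo N\<close>

lemma sum_mod_shift:
  fixes g :: "nat \<Rightarrow> 'a::comm_monoid_add"
  shows "(\<Sum>d<N. g ((a + d) mod N)) = (\<Sum>b<N. g b)"
proof (cases "N = 0")
  case False
  have inj: "inj_on (\<lambda>d. (a + d) mod N) {..<N}"
    unfolding inj_on_def
    by (auto simp: cong_add_lcancel_nat simp flip: cong_def intro: cong_less_modulus_unique_nat)
  then have "(\<lambda>d. (a + d) mod N) ` {..<N} = {..<N}"
    using False by (intro endo_inj_surj) auto
  then show ?thesis
    using sum.reindex[OF inj, of g] by simp
qed simp

lemma sum_three_term_progressions:
  fixes g :: "nat \<Rightarrow> nat \<Rightarrow> nat \<Rightarrow> 'a::comm_monoid_add"
  shows "(\<Sum>a<N. \<Sum>b<N. \<Sum>c<N. if [a + c = 2 * b] (mod N) then g a b c else 0) =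
         (\<Sum>a<N. \<Sum>d<N. g a ((a + d) mod N) ((a + 2 * d) mod N))"
proof (rule sum.cong[OF refl])
  fix a
  have "(\<Sum>c<N. if [a + c = 2 * ((a + d) mod N)] (mod N) then g a ((a + d) mod N) c else 0) =
        g a ((a + d) mod N) ((a + 2 * d) mod N)" if "d < N" for d
  proof -
    have "[2 * ((a + d) mod N) = a + (a + 2 * d)] (mod N)"
      by (simp add: cong_def mod_mult_right_eq algebra_simps)
    then have "[a + c = 2 * ((a + d) mod N)] (mod N) \<longleftrightarrow> [a + c = a + (a + 2 * d)] (mod N)" for c
      using cong_trans cong_sym by blast
    also have "[a + c = a + (a + 2 * d)] (mod N) \<longleftrightarrow> [c = a + 2 * d] (mod N)" for c
      by (rule cong_add_lcancel_nat)
    finally have "[a + c = 2 * ((a + d) mod N)] (mod N) \<longleftrightarrow> c = (a + 2 * d) mod N" if "c < N" for c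
      using that by (simp add: cong_def)
    then show ?thesis
      using \<open>d < N\<close> by (simp cong: if_cong)
  qed
  note inner = this
  let ?h = "\<lambda>b. \<Sum>c<N. if [a + c = 2 * b] (mod N) then g a b c else 0"
  have "(\<Sum>b<N. ?h b) = (\<Sum>d<N. ?h ((a + d) mod N))"
    by (rule sum_mod_shift[symmetric])
  also have "\<dots> = (\<Sum>d<N. g a ((a + d) mod N) ((a + 2 * d) mod N))"
    using inner by (intro sum.cong) auto
  finally show "(\<Sum>b<N. ?h b) = (\<Sum>d<N. g a ((a + d) mod N) ((a + 2 * d) mod N))" .
qed

section \<open>The discrete Fourier transform\<close>

definition unity_root :: "nat \<Rightarrow> complex" where
  "unity_root N = exp (2 * of_real pi * \<i> / of_nat N)"

lemma unity_root_pow: "unity_root N ^ j = exp (2 * of_real pi * \<i> * of_nat j / of_nat N)"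
  unfolding unity_root_def by (metis exp_of_nat_mult mult.commute times_divide_eq_right)

lemma unity_root_pow_eq_iff: "N \<ge> 1 \<Longrightarrow> unity_root N ^ j = unity_root N ^ k \<longleftrightarrow> j mod N = k mod N"
  unfolding unity_root_pow by (rule complex_root_unity_eq)

lemma unity_root_pow_eq_1_iff: "N \<ge> 1 \<Longrightarrow> unity_root N ^ j = 1 \<longleftrightarrow> N dvd j"
  unfolding unity_root_pow by (rule complex_root_unity_eq_1)

lemma norm_unity_root [simp]: "norm (unity_root N) = 1"
  unfolding unity_root_def by (simp add: norm_exp_i_times[of "2 * pi / N", simplified])

lemma unity_root_nonzero [simp]: "unity_root N \<noteq> 0"
  by (simp add: unity_root_def)

lemma cnj_eq_inverse_if_norm_1: "norm (u::complex) = 1 \<Longrightarrow> cnj u = inverse u"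
  by (metis complex_norm_square inverse_unique of_real_1 power_one)

lemma sum_powers_root_of_unity:
  assumes "(z::complex) ^ N = 1" "z \<noteq> 1"
  shows "(\<Sum>r<N. z ^ r) = 0"
  using assms by (simp add: geometric_sum)

lemma sum_unity_root_orthogonality:
  assumes "N \<ge> 1"
  shows "(\<Sum>r<N. (unity_root N ^ x * cnj (unity_root N ^ y)) ^ r) =
         (if [x = y] (mod N) then of_nat N else 0)"
proof -
  let ?\<omega> = "unity_root N"
  have cnj_eq: "cnj (?\<omega> ^ y) = inverse (?\<omega> ^ y)"
    by (simp add: cnj_eq_inverse_if_norm_1 norm_power power_inverse)
  have "?\<omega> ^ x * cnj (?\<omega> ^ y) = 1 \<longleftrightarrow> [x = y] (mod N)"
    unfolding cnj_eq cong_def using unity_root_pow_eq_iff[OF assms] by (simp add: field_simps)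
  moreover have "(?\<omega> ^ x * cnj (?\<omega> ^ y)) ^ N = 1"
    using unity_root_pow_eq_1_iff[OF assms, of N]
    unfolding cnj_eq
    by (simp add: power_mult_distrib power_inverse flip: power_mult) (simp add: power_mult mult.commute)
  ultimately show ?thesis
    using sum_powers_root_of_unity by auto
qed

definition fourier :: "nat \<Rightarrow> (nat \<Rightarrow> real) \<Rightarrow> nat \<Rightarrow> complex" where
  "fourier N f r = (\<Sum>a<N. of_real (f a) * (unity_root N ^ a) ^ r)"

lemma sum_unity_root_filter:
  assumes "N \<ge> 1"
  shows "(\<Sum>r<N. \<Sum>i\<in>I. g i * (unity_root N ^ x i * cnj (unity_root N ^ y i)) ^ r) =
         of_nat N * (\<Sum>i\<in>I. if [x i = y i] (mod N) then g i else 0)"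
proof -
  have "(\<Sum>r<N. \<Sum>i\<in>I. g i * (unity_root N ^ x i * cnj (unity_root N ^ y i)) ^ r) =
        (\<Sum>i\<in>I. g i * (\<Sum>r<N. (unity_root N ^ x i * cnj (unity_root N ^ y i)) ^ r))"
    by (subst sum.swap) (simp only: sum_distrib_left)
  then show ?thesis
    by (simp only: sum_unity_root_orthogonality[OF assms])
       (simp add: sum_distrib_left if_distrib mult.commute cong: if_cong)
qed

lemma norm_fourier_sq:
  "of_real (norm (fourier N f r) ^ 2) =
   (\<Sum>(a, b)\<in>{..<N} \<times> {..<N}. of_real (f a * f b) * (unity_root N ^ a * cnj (unity_root N ^ b)) ^ r)"
  unfolding complex_norm_square fourier_def
  by (simp add: sum_product power_mult_distrib mult_ac flip: sum.cartesian_product)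

lemma parseval:
  assumes "N \<ge> 1"
  shows "(\<Sum>r<N. norm (fourier N f r) ^ 2) = N * (\<Sum>a<N. f a ^ 2)"
proof -
  have "(of_real (\<Sum>r<N. norm (fourier N f r) ^ 2) :: complex) =
        of_nat N * (\<Sum>(a, b)\<in>{..<N} \<times> {..<N}. if [a = b] (mod N) then of_real (f a * f b) else 0)"
    using sum_unity_root_filter[OF assms, where g = "\<lambda>(a, b). of_real (f a * f b)"
        and x = fst and y = snd]
    by (simp only: of_real_sum norm_fourier_sq case_prod_unfold)
  also have "\<dots> = of_real (N * (\<Sum>a<N. f a ^ 2))"
    by (simp add: cong_def sum.cartesian_product[symmetric] power2_eq_square)
  finally show ?thesis
    by (simp only: of_real_eq_iff)
qed

lemma sum_product3:
  fixes x y z :: "'i \<Rightarrow> 'a::comm_semiring_0"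
  shows "sum x A * sum y B * sum z C = (\<Sum>(a, b, c)\<in>A \<times> B \<times> C. x a * y b * z c)"
proof -
  have "sum x A * sum y B * sum z C = (\<Sum>a\<in>A. x a * (sum y B * sum z C))"
    by (simp only: sum_distrib_right mult.assoc)
  also have "\<dots> = (\<Sum>a\<in>A. \<Sum>b\<in>B. \<Sum>c\<in>C. x a * (y b * z c))"
    unfolding sum_product by (simp only: sum_distrib_left)
  finally show ?thesis
    by (simp only: sum.cartesian_product mult.assoc)
qed

lemma fourier_sq_cnj_double:
  "fourier N f r ^ 2 * cnj (fourier N f (2 * r)) =
   (\<Sum>(a, b, c)\<in>{..<N} \<times> {..<N} \<times> {..<N}.
      of_real (f a * f b * f c) * (unity_root N ^ (a + c) * cnj (unity_root N ^ (2 * b))) ^ r)"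
proof -
  let ?\<omega> = "unity_root N"
  have "fourier N f r ^ 2 * cnj (fourier N f (2 * r)) =
        fourier N f r * cnj (fourier N f (2 * r)) * fourier N f r"
    by (simp add: power2_eq_square mult_ac)
  also have "\<dots> = (\<Sum>(a, b, c)\<in>{..<N} \<times> {..<N} \<times> {..<N}.
      of_real (f a) * (?\<omega> ^ a) ^ r * cnj (of_real (f b) * (?\<omega> ^ b) ^ (2 * r)) *
      (of_real (f c) * (?\<omega> ^ c) ^ r))"
    unfolding fourier_def cnj_sum by (rule sum_product3)
  also have "\<dots> = (\<Sum>(a, b, c)\<in>{..<N} \<times> {..<N} \<times> {..<N}.
      of_real (f a * f b * f c) * (?\<omega> ^ (a + c) * cnj (?\<omega> ^ (2 * b))) ^ r)"
    by (intro sum.cong refl) (auto simp: power_mult_distrib power_add mult_ac simp flip: power_mult)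
  finally show ?thesis .
qed

lemma sum_fourier_sq_cnj_double:
  assumes "N \<ge> 1"
  shows "(\<Sum>r<N. fourier N f r ^ 2 * cnj (fourier N f (2 * r))) =
         of_real (N * (\<Sum>n<N. \<Sum>d<N. f n * f ((n + d) mod N) * f ((n + 2 * d) mod N)))"
proof -
  have "(\<Sum>r<N. fourier N f r ^ 2 * cnj (fourier N f (2 * r))) =
        of_nat N * (\<Sum>(a, b, c)\<in>{..<N} \<times> {..<N} \<times> {..<N}.
          if [a + c = 2 * b] (mod N) then of_real (f a * f b * f c) else 0)"
    using sum_unity_root_filter[OF assms, where g = "\<lambda>(a, b, c). of_real (f a * f b * f c)"
        and x = "\<lambda>(a, b, c). a + c" and y = "\<lambda>(a, b, c). 2 * b"]
    by (simp only: fourier_sq_cnj_double case_prod_unfold)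
  also have "\<dots> = of_nat N * (\<Sum>a<N. \<Sum>b<N. \<Sum>c<N.
          if [a + c = 2 * b] (mod N) then of_real (f a * f b * f c) else 0)"
    by (simp add: sum.cartesian_product)
  also have "\<dots> = of_real (N * (\<Sum>n<N. \<Sum>d<N. f n * f ((n + d) mod N) * f ((n + 2 * d) mod N)))"
    by (simp only: sum_three_term_progressions) simp
  finally show ?thesis .
qed

lemma Lambda3_lower_bound_fourier:
  fixes f :: "nat \<Rightarrow> real"
  assumes N: "N \<ge> 1"
    and bound: "\<And>r. 0 < r \<Longrightarrow> r < N \<Longrightarrow> norm (fourier N f (2 * r)) \<le> M"
  defines "S \<equiv> \<Sum>a<N. f a"
  shows "S ^ 3 - M * (N * (\<Sum>a<N. f a ^ 2) - S ^ 2) \<le> real N ^ 3 * Lambda3 N f"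
proof -
  let ?F = "fourier N f"
  have split_0: "(\<Sum>r<N. h r) = h 0 + (\<Sum>r\<in>{1..<N}. h r)" for h :: "nat \<Rightarrow> 'b::comm_monoid_add"
    using N by (simp add: lessThan_atLeast0 sum.atLeast_Suc_lessThan)
  have F0: "?F 0 = of_real S"
    by (simp add: fourier_def S_def)
  have term_ge: "- (norm (?F r) ^ 2 * M) \<le> Re (?F r ^ 2 * cnj (?F (2 * r)))" if "r \<in> {1..<N}" for r
  proof -
    have "- Re (?F r ^ 2 * cnj (?F (2 * r))) \<le> norm (?F r) ^ 2 * norm (?F (2 * r))"
      using abs_Re_le_cmod[of "?F r ^ 2 * cnj (?F (2 * r))"] by (simp add: norm_mult norm_power)
    also have "\<dots> \<le> norm (?F r) ^ 2 * M"
      using bound that by (intro mult_left_mono) auto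
    finally show ?thesis
      by linarith
  qed
  have "real N ^ 3 * Lambda3 N f = Re (\<Sum>r<N. ?F r ^ 2 * cnj (?F (2 * r)))"
    unfolding sum_fourier_sq_cnj_double[OF N] Re_complex_of_real Lambda3_def
    using N by (simp add: power2_eq_square power3_eq_cube)
  also have "\<dots> = S ^ 3 + (\<Sum>r\<in>{1..<N}. Re (?F r ^ 2 * cnj (?F (2 * r))))"
    by (simp add: split_0 F0 power2_eq_square power3_eq_cube)
  also have "\<dots> \<ge> S ^ 3 - (\<Sum>r\<in>{1..<N}. norm (?F r) ^ 2) * M"
  proof -
    have "(\<Sum>r\<in>{1..<N}. - (norm (?F r) ^ 2 * M)) \<le> (\<Sum>r\<in>{1..<N}. Re (?F r ^ 2 * cnj (?F (2 * r))))"
      by (rule sum_mono) (rule term_ge)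
    then show ?thesis
      by (simp only: sum_negf sum_distrib_right)
  qed
  also have "(\<Sum>r\<in>{1..<N}. norm (?F r) ^ 2) = N * (\<Sum>a<N. f a ^ 2) - S ^ 2"
    using parseval[OF N, of f] by (simp add: split_0 F0)
  finally show ?thesis
    by (simp add: mult.commute)
qed

section \<open>Fourier coefficients of dense functions\<close>

lemma cube_one_plus_Re:
  assumes "norm (u::complex) = 1"
  shows "(1 + Re u) ^ 3 = 5/2 + 15/4 * Re u + 3/2 * Re (u ^ 2) + 1/4 * Re (u ^ 3)"
  using assms cmod_power2[of u] by (simp add: power2_eq_square power3_eq_cube) algebra

lemma mult_le_cube_bound:
  fixes x y :: real
  assumes "0 \<le> x" "x \<le> 1" "-1 \<le> y" "y \<le> 1"
  shows "x * y \<le> x / 3 + (1 + y) ^ 3 / 12"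
proof -
  have "(1 + y) ^ 3 / 12 - (y - 1/3) = (y - 1) ^ 2 * (y + 5) / 12"
    by (simp add: power2_eq_square power3_eq_cube algebra_simps)
  also have "\<dots> \<ge> 0"
    using assms by simp
  finally have "x * (y - 1/3) \<le> x * ((1 + y) ^ 3 / 12)"
    using assms(1) by (intro mult_left_mono) auto
  also have "\<dots> \<le> (1 + y) ^ 3 / 12"
    using assms by (simp add: mult_left_le_one_le)
  finally show ?thesis
    by (simp add: algebra_simps)
qed

lemma norm_sum_root_of_unity_le:
  fixes g :: "nat \<Rightarrow> real" and z :: complex
  assumes g: "\<And>a. a < N \<Longrightarrow> 0 \<le> g a \<and> g a \<le> 1"
    and z: "norm z = 1" "z ^ N = 1" "z \<noteq> 1" "z ^ 2 \<noteq> 1" "z ^ 3 \<noteq> 1"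
  shows "norm (\<Sum>a<N. of_real (g a) * z ^ a) \<le> (\<Sum>a<N. g a) / 3 + 5 * real N / 24"
proof -
  define Z where "Z = (\<Sum>a<N. of_real (g a) * z ^ a)"
  define w where "w = cis (- Arg Z)"
  define y where "y a = Re (w * z ^ a)" for a
  have norm_wz: "norm (w * z ^ a) = 1" for a
    using z(1) by (simp add: w_def norm_mult norm_power)
  have y: "-1 \<le> y a \<and> y a \<le> 1" for a
    using abs_Re_le_cmod[of "w * z ^ a"] norm_wz[of a] unfolding y_def by linarith
  have power_sums: "(\<Sum>a<N. (w * z ^ a) ^ k) = 0" if "k \<in> {1, 2, 3}" for k
  proof -
    have "(z ^ k) ^ N = 1"
      by (metis z(2) mult.commute power_mult power_one)
    moreover have "z ^ k \<noteq> 1"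
      using z that by auto
    ultimately have "(\<Sum>a<N. (z ^ k) ^ a) = 0"
      by (rule sum_powers_root_of_unity)
    moreover have "(w * z ^ a) ^ k = w ^ k * (z ^ k) ^ a" for a
      by (metis power_mult power_mult_distrib mult.commute)
    ultimately show ?thesis
      by (simp flip: sum_distrib_left)
  qed
  have "(\<Sum>a<N. (1 + y a) ^ 3) = 5 * real N / 2 + 15/4 * Re (\<Sum>a<N. w * z ^ a)
      + 3/2 * Re (\<Sum>a<N. (w * z ^ a) ^ 2) + 1/4 * Re (\<Sum>a<N. (w * z ^ a) ^ 3)"
    unfolding y_def cube_one_plus_Re[OF norm_wz] by (simp add: sum.distrib sum_distrib_left)
  also have "\<dots> = 5 * real N / 2"
    using power_sums[of 1] power_sums[of 2] power_sums[of 3] by simp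
  finally have cube_sum: "(\<Sum>a<N. (1 + y a) ^ 3) = 5 * real N / 2" .
  have "w * Z = of_real (norm Z)"
    by (subst (2) rcis_cmod_Arg[symmetric]) (simp add: w_def rcis_def cis_mult flip: cis_divide)
  then have "norm Z = Re (w * Z)"
    by simp
  also have "\<dots> = (\<Sum>a<N. g a * y a)"
    unfolding Z_def y_def by (simp add: sum_distrib_left algebra_simps)
  also have "\<dots> \<le> (\<Sum>a<N. g a / 3 + (1 + y a) ^ 3 / 12)"
    using g y by (intro sum_mono mult_le_cube_bound) auto
  also have "\<dots> = (\<Sum>a<N. g a) / 3 + 5 * real N / 24"
    by (simp add: sum.distrib cube_sum flip: sum_divide_distrib)
  finally show ?thesis
    unfolding Z_def .
qed

lemma norm_sum_root_of_unity_le_complement: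
  fixes f :: "nat \<Rightarrow> real" and z :: complex
  assumes f: "\<And>a. a < N \<Longrightarrow> 0 \<le> f a \<and> f a \<le> 1"
    and z: "norm z = 1" "z ^ N = 1" "z \<noteq> 1" "z ^ 2 \<noteq> 1" "z ^ 3 \<noteq> 1"
  shows "norm (\<Sum>a<N. of_real (f a) * z ^ a) \<le> (N - (\<Sum>a<N. f a)) / 3 + 5 * real N / 24"
proof -
  have "(\<Sum>a<N. of_real (f a) * z ^ a) = (\<Sum>a<N. z ^ a) - (\<Sum>a<N. of_real (1 - f a) * z ^ a)"
    by (simp add: sum_subtractf algebra_simps)
  also have "(\<Sum>a<N. z ^ a) = 0"
    using z(2,3) by (rule sum_powers_root_of_unity)
  finally have "norm (\<Sum>a<N. of_real (f a) * z ^ a) = norm (\<Sum>a<N. of_real (1 - f a) * z ^ a)"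
    by simp
  also have "\<dots> \<le> (\<Sum>a<N. 1 - f a) / 3 + 5 * real N / 24"
    using f z by (intro norm_sum_root_of_unity_le) auto
  finally show ?thesis
    by (simp add: sum_subtractf)
qed

lemma not_dvd_2_mult_if_coprime_6:
  fixes N r k :: nat
  assumes "odd N" "\<not> 3 dvd N" "0 < r" "r < N" "k \<in> {1, 2, 3}"
  shows "\<not> N dvd 2 * r * k"
proof
  assume "N dvd 2 * r * k"
  moreover have "coprime N (2 * k)"
    using assms(1,2,5) prime_imp_coprime[of 3 N] by (auto simp: coprime_commute)
  ultimately have "N dvd r"
    by (metis coprime_dvd_mult_left_iff mult.assoc mult.commute)
  then show False
    using assms(3,4) by (simp add: nat_dvd_not_less)
qed

lemma norm_fourier_double_le:
  assumes "odd N" "\<not> 3 dvd N" "0 < r" "r < N"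
    and f: "\<And>a. a < N \<Longrightarrow> 0 \<le> f a \<and> f a \<le> 1"
  shows "norm (fourier N f (2 * r)) \<le> (N - (\<Sum>a<N. f a)) / 3 + 5 * real N / 24"
proof -
  let ?z = "unity_root N ^ (2 * r)"
  have N: "N \<ge> 1"
    using \<open>odd N\<close> by (cases N) auto
  have nontrivial: "?z ^ k \<noteq> 1" if "k \<in> {1, 2, 3}" for k
    using not_dvd_2_mult_if_coprime_6[OF assms(1-4) that] unity_root_pow_eq_1_iff[OF N]
    by (simp flip: power_mult)
  have "fourier N f (2 * r) = (\<Sum>a<N. of_real (f a) * ?z ^ a)"
    unfolding fourier_def by (simp flip: power_mult add: mult.commute)
  also have "norm \<dots> \<le> (N - (\<Sum>a<N. f a)) / 3 + 5 * real N / 24"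
  proof (rule norm_sum_root_of_unity_le_complement[OF f])
    show "?z ^ N = 1"
      using unity_root_pow_eq_1_iff[OF N] by (simp flip: power_mult)
  qed (use nontrivial[of 1] nontrivial[of 2] nontrivial[of 3] in \<open>simp_all add: norm_power\<close>)
  finally show ?thesis .
qed

section \<open>Bounds on rho\<close>

lemma cubic_lower_bound:
  fixes S n :: real
  assumes "2 * n / 3 \<le> S" "0 \<le> n"
  shows "73 / 324 * n ^ 3 \<le> S ^ 3 - 23 * n / 72 * (n * S - S ^ 2)"
proof -
  have "S ^ 3 - 23 * n / 72 * (n * S - S ^ 2) - 73 / 324 * n ^ 3 =
        (S - 2 * n / 3) * (S ^ 2 + 71 / 72 * n * S + 73 / 216 * n ^ 2)"
    by (simp add: power2_eq_square power3_eq_cube field_simps)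
  also have "\<dots> \<ge> 0"
    using assms by (intro mult_nonneg_nonneg) auto
  finally show ?thesis
    by simp
qed

lemma Lambda3_ge_if_coprime_6:
  assumes "odd N" "\<not> 3 dvd N"
    and f: "\<forall>n<N. 0 \<le> f n \<and> f n \<le> 1" and mean: "ZE N f \<ge> 2/3"
  shows "Lambda3 N f \<ge> 73/324"
proof -
  define S where "S = (\<Sum>a<N. f a)"
  have N: "N \<ge> 1"
    using \<open>odd N\<close> by (cases N) auto
  have S: "2 * real N / 3 \<le> S"
    using mean N unfolding ZE_def S_def by (simp add: field_simps)
  have "norm (fourier N f (2 * r)) \<le> 23 * real N / 72" if "0 < r" "r < N" for r
  proof -
    have "norm (fourier N f (2 * r)) \<le> (N - S) / 3 + 5 * real N / 24"
      using norm_fourier_double_le[OF assms(1,2) that] f unfolding S_def by auto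
    also have "\<dots> \<le> 23 * real N / 72"
      using S by (simp add: field_simps)
    finally show ?thesis .
  qed
  then have "S ^ 3 - 23 * real N / 72 * (N * (\<Sum>a<N. f a ^ 2) - S ^ 2) \<le> real N ^ 3 * Lambda3 N f"
    unfolding S_def by (rule Lambda3_lower_bound_fourier[OF N])
  moreover have "(\<Sum>a<N. f a ^ 2) \<le> S"
    unfolding S_def using f by (intro sum_mono) (simp add: power2_eq_square mult_left_le_one_le)
  then have "23 * real N / 72 * (N * (\<Sum>a<N. f a ^ 2) - S ^ 2) \<le> 23 * real N / 72 * (N * S - S ^ 2)"
    by (intro mult_left_mono) (auto intro: mult_left_mono)
  ultimately have "S ^ 3 - 23 * real N / 72 * (N * S - S ^ 2) \<le> real N ^ 3 * Lambda3 N f"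
    by linarith
  then have "73 / 324 * real N ^ 3 \<le> real N ^ 3 * Lambda3 N f"
    using cubic_lower_bound[OF S] by simp
  then show ?thesis
    using N by (simp add: mult.commute)
qed

lemma rho_le_Lambda3:
  assumes "\<forall>n<N. 0 \<le> f n \<and> f n \<le> 1" "ZE N f \<ge> v"
  shows "rho v N \<le> Lambda3 N f"
  unfolding rho_def
proof (rule cInf_lower)
  show "bdd_below {Lambda3 N f | f. (\<forall>n<N. 0 \<le> f n \<and> f n \<le> 1) \<and> ZE N f \<ge> v}"
    by (rule bdd_belowI[of _ 0])
       (auto simp: Lambda3_def intro!: sum_nonneg mult_nonneg_nonneg divide_nonneg_nonneg)
qed (use assms in blast)

lemma rho_ge:
  assumes "N \<ge> 1" "v \<le> 1"
    and "\<And>f. \<forall>n<N. 0 \<le> f n \<and> f n \<le> 1 \<Longrightarrow> ZE N f \<ge> v \<Longrightarrow> c \<le> Lambda3 N f"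
  shows "c \<le> rho v N"
  unfolding rho_def
proof (rule cInf_greatest)
  have "ZE N (\<lambda>_. 1) = 1"
    using assms(1) by (simp add: ZE_def)
  then have "Lambda3 N (\<lambda>_. 1) \<in> {Lambda3 N f | f. (\<forall>n<N. 0 \<le> f n \<and> f n \<le> 1) \<and> ZE N f \<ge> v}"
    using assms(2) by auto
  then show "{Lambda3 N f | f. (\<forall>n<N. 0 \<le> f n \<and> f n \<le> 1) \<and> ZE N f \<ge> v} \<noteq> {}"
    by blast
qed (use assms(3) in blast)

lemma rho_ge_if_coprime_6:
  assumes "odd N" "\<not> 3 dvd N"
  shows "73/324 \<le> rho (2/3) N"
proof (rule rho_ge)
  show "N \<ge> 1"
    using \<open>odd N\<close> by (cases N) auto
qed (use Lambda3_ge_if_coprime_6[OF assms] in auto)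

lemma card_multiples_below:
  assumes "k > 0"
  shows "card ({..<k * m} \<inter> {n. k dvd n}) = m"
proof -
  have "{..<k * m} \<inter> {n. k dvd n} = (\<lambda>j. k * j) ` {..<m}"
    using assms by auto
  then show ?thesis
    using assms by (simp add: card_image inj_on_def)
qed

lemma rho_le_if_3_dvd:
  assumes "3 dvd N" "N \<ge> 1"
  shows "rho (2/3) N \<le> 2/9"
proof -
  obtain m where m: "N = 3 * m" "m \<ge> 1"
    using assms by auto
  define f :: "nat \<Rightarrow> real" where "f n = of_bool (\<not> 3 dvd n)" for n
  have count: "(\<Sum>n<N. f n) = 2 * m" "(\<Sum>n<N. 1 - f n) = m"
    using card_multiples_below[of 3 m] by (simp_all add: f_def m(1) of_bool_not_iff sum_subtractf)
  have "f n * f ((n + d) mod N) * f ((n + 2 * d) mod N) = f n * (1 - f d)" for n d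
    using \<open>3 dvd N\<close> by (simp add: f_def dvd_mod_iff) presburger
  then have "(\<Sum>n<N. \<Sum>d<N. f n * f ((n + d) mod N) * f ((n + 2 * d) mod N)) =
      (\<Sum>n<N. f n) * (\<Sum>d<N. 1 - f d)"
    by (simp only: sum_product)
  then have "Lambda3 N f = 2/9"
    unfolding Lambda3_def count using m by (simp add: power2_eq_square)
  moreover have "ZE N f = 2/3"
    unfolding ZE_def count using m by simp
  ultimately show ?thesis
    using rho_le_Lambda3[of N f "2/3"] by (auto simp: f_def)
qed

theorem theorem2:
  shows "\<not> (\<exists>L. ((\<lambda>N. rho (2/3) N) \<longlongrightarrow> L) (inf at_top (principal {N. odd N})))"
proof
  let ?F = "inf at_top (principal {N. odd N})"
  assume "\<exists>L. ((\<lambda>N. rho (2/3) N) \<longlongrightarrow> L) ?F"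
  then obtain L where L: "((\<lambda>N. rho (2/3) N) \<longlongrightarrow> L) ?F" ..
  have upper: "rho (2/3) (3 * (2 * k + 1)) \<le> 2/9" for k
    by (rule rho_le_if_3_dvd) simp_all
  have "filterlim (\<lambda>k. 3 * (2 * k + 1)) ?F sequentially"
    by (auto simp: filterlim_inf filterlim_principal intro!: filterlim_subseq strict_monoI)
  from filterlim_compose[OF L this] have "L \<le> 2/9"
    by (rule tendsto_upperbound) (intro always_eventually allI upper, simp)
  have lower: "73/324 \<le> rho (2/3) (6 * k + 7)" for k
    by (rule rho_ge_if_coprime_6) presburger+
  have "filterlim (\<lambda>k. 6 * k + 7) ?F sequentially"
    by (auto simp: filterlim_inf filterlim_principal intro!: filterlim_subseq strict_monoI)
  from filterlim_compose[OF L this] have "73/324 \<le> L"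
    by (rule tendsto_lowerbound) (intro always_eventually allI lower, simp)
  with \<open>L \<le> 2/9\<close> show False
    by simp
qed

end
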